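(* Let $s\geq1$ and consider an explicit $s$-stage Runge–Kutta method in Shu–Osher form with coefficients $a_{i,k}\geq0$, $b_{i,k}\geq0$ ($1\leq i\leq s$, $0\leq k\leq i-1$), $\sum_{k=0}^{i-1}a_{i,k}=1$ for each $i$. Let $\alpha>0$ and $T^{(1)}_\lambda(\beta,\Delta t)=(1-\beta\Delta t\lambda)^{-1}$. Apply the method to $dy/dt=T^{(1)}_\lambda(\alpha,\Delta t)\lambda y$: $y^{(0)}=y^n$, $y^{(i)}=\sum_{k=0}^{i-1}\left(a_{i,k}y^{(k)}+\Delta t\,b_{i,k}T^{(1)}_\lambda(\alpha,\Delta t)\lambda y^{(k)}\right)$, $y^{n+1}=y^{(s)}$. Suppose that for every pair $(i,k)$ with $b_{i,k}>0$, setting $\alpha_{i,k}=(a_{i,k}/b_{i,k})\alpha$, the explicit Euler integration of $dy/dt=T^{(1)}_\lambda(\alpha_{i,k},\Delta t)\lambda y$ is unconditionally stable, i.e. $|1+\Delta t\,T^{(1)}_\lambda(\alpha_{i,k},\Delta t)\lambda|\leq1$ for all $\Delta t>0$ and all $\lambda\in\mathbb{C}$ with $\mathrm{Re}(\lambda)\leq0$. Then the Runge–Kutta integration above is unconditionally stable: $|y^{n+1}|\leq|y^n|$ for all $\Delta t>0$, all $\lambda$ with $\mathrm{Re}(\lambda)\leq 0$ and all $y^n\in\mathbb{C}$. *)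

theory Defs
  imports "HOL-Analysis.Analysis"
begin

definition T1 :: "complex \<Rightarrow> real \<Rightarrow> real \<Rightarrow> complex" where
  "T1 lam \<beta> dt = inverse (1 - complex_of_real (\<beta> * dt) * lam)"

fun rk_stages :: "(nat \<Rightarrow> nat \<Rightarrow> real) \<Rightarrow> (nat \<Rightarrow> nat \<Rightarrow> real) \<Rightarrow> real \<Rightarrow> real \<Rightarrow> complex
    \<Rightarrow> complex \<Rightarrow> nat \<Rightarrow> complex list" where
  "rk_stages a b \<alpha> dt lam y0 0 = [y0]"
| "rk_stages a b \<alpha> dt lam y0 (Suc i) =
     (let ys = rk_stages a b \<alpha> dt lam y0 i in
      ys @ [\<Sum>k<Suc i. complex_of_real (a (Suc i) k) * ys ! k
              + complex_of_real (dt * b (Suc i) k) * T1 lam \<alpha> dt * lam * ys ! k])"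

definition rk_step :: "nat \<Rightarrow> (nat \<Rightarrow> nat \<Rightarrow> real) \<Rightarrow> (nat \<Rightarrow> nat \<Rightarrow> real) \<Rightarrow> real \<Rightarrow> real
    \<Rightarrow> complex \<Rightarrow> complex \<Rightarrow> complex" where
  "rk_step s a b \<alpha> dt lam yn = rk_stages a b \<alpha> dt lam yn s ! s"

end

theory Submission
  imports Defs
begin

text \<open>Each Shu--Osher stage y^(i) is a convex combination, with weights a i k, of the terms
  a i k y^(k) + dt b i k T1 \<lambda> \<alpha> dt \<lambda> y^(k) = a i k (1 + (dt / c) T1 \<lambda> \<alpha> dt \<lambda>) y^(k),
  where c = a i k / b i k. Since T1 depends on \<beta> and dt only through \<beta> dt, the factor
  1 + (dt / c) T1 \<lambda> \<alpha> dt \<lambda> is the explicit Euler amplification factor for the operator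
  with parameter c \<alpha> at step dt / c, which has modulus at most 1 by hypothesis.\<close>

definition euler_unconditionally_stable :: "real \<Rightarrow> bool" where
  "euler_unconditionally_stable \<beta> \<longleftrightarrow>
     (\<forall>dt::real. \<forall>lam::complex. dt > 0 \<longrightarrow> Re lam \<le> 0 \<longrightarrow>
        cmod (1 + complex_of_real dt * T1 lam \<beta> dt * lam) \<le> 1)"

lemma T1_rescale: "c \<noteq> 0 \<Longrightarrow> T1 lam (c * \<beta>) (dt / c) = T1 lam \<beta> dt"
  by (simp add: T1_def)

lemma not_euler_unconditionally_stable_0: "\<not> euler_unconditionally_stable 0"
proof
  assume "euler_unconditionally_stable 0"
  moreover have "Re (-3 :: complex) \<le> 0" by simp
  ultimately have "cmod (1 + complex_of_real 1 * T1 (-3) 0 1 * (-3)) \<le> 1"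
    unfolding euler_unconditionally_stable_def by (meson zero_less_one)
  then show False by (simp add: T1_def)
qed

lemma euler_unconditionally_stable_rescaled:
  assumes "euler_unconditionally_stable (c * \<beta>)" "c > 0" "dt > 0" "Re lam \<le> 0"
  shows "cmod (1 + complex_of_real (dt / c) * T1 lam \<beta> dt * lam) \<le> 1"
  using assms T1_rescale[of c lam \<beta> dt] unfolding euler_unconditionally_stable_def
  by (metis divide_pos_pos less_irrefl)

lemma norm_stage_term_le:
  fixes a b \<alpha> dt :: real and lam y :: complex
  assumes "a \<ge> 0" "b \<ge> 0" "dt > 0" "Re lam \<le> 0"
    and stable: "b > 0 \<Longrightarrow> euler_unconditionally_stable (a / b * \<alpha>)"
  shows "cmod (complex_of_real a * y + complex_of_real (dt * b) * T1 lam \<alpha> dt * lam * y)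
           \<le> a * cmod y"
proof (cases "b = 0")
  case True
  then show ?thesis using \<open>a \<ge> 0\<close> by (simp add: norm_mult)
next
  case False
  with \<open>b \<ge> 0\<close> have "b > 0" by simp
  with stable have stable_ab: "euler_unconditionally_stable (a / b * \<alpha>)" .
  \<comment> \<open>plain explicit Euler (\<beta> = 0) is not unconditionally stable, so b > 0 forces a \<noteq> 0\<close>
  with not_euler_unconditionally_stable_0 have "a \<noteq> 0" by auto
  define c where "c = a / b"
  have "c > 0" using \<open>a \<ge> 0\<close> \<open>a \<noteq> 0\<close> \<open>b > 0\<close> by (simp add: c_def)
  let ?g = "1 + complex_of_real (dt / c) * T1 lam \<alpha> dt * lam"
  have "complex_of_real a * y + complex_of_real (dt * b) * T1 lam \<alpha> dt * lam * y
          = complex_of_real a * ?g * y"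
    using \<open>a \<noteq> 0\<close> \<open>b > 0\<close> by (simp add: c_def field_simps)
  also have "cmod \<dots> = a * cmod ?g * cmod y"
    using \<open>a \<ge> 0\<close> by (simp add: norm_mult)
  also have "\<dots> \<le> a * 1 * cmod y"
    using euler_unconditionally_stable_rescaled[OF stable_ab[folded c_def] \<open>c > 0\<close> assms(3,4)]
      \<open>a \<ge> 0\<close> by (intro mult_right_mono mult_left_mono) auto
  finally show ?thesis by simp
qed

lemma norm_sum_le_convex:
  fixes z :: "nat \<Rightarrow> 'a::real_normed_vector"
  assumes "\<And>k. k < n \<Longrightarrow> norm (z k) \<le> w k * M" "(\<Sum>k<n. w k) = 1"
  shows "norm (\<Sum>k<n. z k) \<le> M"
proof -
  have "norm (\<Sum>k<n. z k) \<le> (\<Sum>k<n. w k * M)"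
    using assms(1) by (intro order.trans[OF norm_sum sum_mono]) auto
  also have "\<dots> = M"
    using assms(2) by (simp add: sum_distrib_right[symmetric])
  finally show ?thesis .
qed

lemma length_rk_stages: "length (rk_stages a b \<alpha> dt lam y0 i) = Suc i"
  by (induction i) (simp_all add: Let_def)

lemma nth_rk_stages:
  "j \<le> i \<Longrightarrow> rk_stages a b \<alpha> dt lam y0 i ! j = rk_stages a b \<alpha> dt lam y0 j ! j"
proof (induction i)
  case (Suc i)
  show ?case
  proof (cases "j = Suc i")
    case False
    with Suc.prems have "j < length (rk_stages a b \<alpha> dt lam y0 i)"
      by (simp add: length_rk_stages)
    with False Suc.prems show ?thesis
      by (simp only: rk_stages.simps Let_def nth_append if_True Suc.IH)
  qed simp
qed simp

lemma rk_stage_Suc: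
  "rk_stages a b \<alpha> dt lam y0 (Suc i) ! Suc i =
     (\<Sum>k<Suc i. complex_of_real (a (Suc i) k) * (rk_stages a b \<alpha> dt lam y0 k ! k)
        + complex_of_real (dt * b (Suc i) k) * T1 lam \<alpha> dt * lam
            * (rk_stages a b \<alpha> dt lam y0 k ! k))"
  unfolding rk_stages.simps(2) Let_def nth_append length_rk_stages
  apply (simp only: less_irrefl if_False diff_self_eq_0 nth_Cons_0)
  apply (intro sum.cong refl)
  subgoal for k using nth_rk_stages[of k i a b \<alpha> dt lam y0] by simp
  done

lemma norm_rk_stage_le:
  assumes step: "\<And>i k y. 1 \<le> i \<Longrightarrow> i \<le> s \<Longrightarrow> k < i \<Longrightarrow>
      cmod (complex_of_real (a i k) * y + complex_of_real (dt * b i k) * T1 lam \<alpha> dt * lam * y)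
        \<le> a i k * cmod y"
    and weights: "\<And>i. 1 \<le> i \<Longrightarrow> i \<le> s \<Longrightarrow> (\<Sum>k<i. a i k) = 1"
    and "i \<le> s"
  shows "cmod (rk_stages a b \<alpha> dt lam y0 i ! i) \<le> cmod y0"
  using \<open>i \<le> s\<close>
proof (induction i rule: less_induct)
  case (less i)
  show ?case
  proof (cases i)
    case 0
    then show ?thesis by simp
  next
    case (Suc m)
    let ?y = "\<lambda>k. rk_stages a b \<alpha> dt lam y0 k ! k"
    have "cmod (complex_of_real (a i k) * ?y k
                  + complex_of_real (dt * b i k) * T1 lam \<alpha> dt * lam * ?y k)
            \<le> a i k * cmod y0" if "k < i" for k
    proof -
      have "a i k \<ge> 0"
        using order.trans[OF norm_ge_zero step[of i k 1]] that less.prems Suc by simp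
      then show ?thesis
        using step[of i k "?y k"] less.IH[of k] that less.prems Suc
        by (force intro: order.trans mult_left_mono)
    qed
    moreover have "(\<Sum>k<i. a i k) = 1"
      using less.prems Suc by (intro weights) simp_all
    ultimately show ?thesis
      unfolding Suc rk_stage_Suc by (rule norm_sum_le_convex)
  qed
qed

theorem lemma2:
  fixes s :: nat and a b :: "nat \<Rightarrow> nat \<Rightarrow> real" and \<alpha> :: real
  assumes "s \<ge> 1"
    and "\<And>i k. 1 \<le> i \<Longrightarrow> i \<le> s \<Longrightarrow> k < i \<Longrightarrow> a i k \<ge> 0"
    and "\<And>i k. 1 \<le> i \<Longrightarrow> i \<le> s \<Longrightarrow> k < i \<Longrightarrow> b i k \<ge> 0"
    and "\<And>i. 1 \<le> i \<Longrightarrow> i \<le> s \<Longrightarrow> (\<Sum>k<i. a i k) = 1"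
    and "\<alpha> > 0"
    and "\<And>i k. 1 \<le> i \<Longrightarrow> i \<le> s \<Longrightarrow> k < i \<Longrightarrow> b i k > 0 \<Longrightarrow>
           (\<forall>dt::real. \<forall>lam::complex. dt > 0 \<longrightarrow> Re lam \<le> 0 \<longrightarrow>
              cmod (1 + complex_of_real dt * T1 lam ((a i k / b i k) * \<alpha>) dt * lam) \<le> 1)"
  shows "\<forall>dt::real. \<forall>lam::complex. \<forall>yn::complex. dt > 0 \<longrightarrow> Re lam \<le> 0 \<longrightarrow>
           cmod (rk_step s a b \<alpha> dt lam yn) \<le> cmod yn"
proof (intro allI impI)
  fix dt :: real and lam yn :: complex
  assume "dt > 0" "Re lam \<le> 0"
  have "cmod (complex_of_real (a i k) * y + complex_of_real (dt * b i k) * T1 lam \<alpha> dt * lam * y)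
          \<le> a i k * cmod y" if "1 \<le> i" "i \<le> s" "k < i" for i k y
    using that assms(2,3,6) \<open>dt > 0\<close> \<open>Re lam \<le> 0\<close>
    by (intro norm_stage_term_le) (auto simp: euler_unconditionally_stable_def)
  from norm_rk_stage_le[OF this assms(4) order.refl]
  show "cmod (rk_step s a b \<alpha> dt lam yn) \<le> cmod yn"
    by (simp add: rk_step_def)
qed

end
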